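(* Let $M$ be a globally hyperbolic developable conformally flat spacetime of dimension $n\ge3$ with developing map $D:M\to\widetilde{Ein}_{1,n-1}$, and assume $M$ has no conjugate points. Then for every $p\in M$, the restriction of $D$ to the causal past $J^-(p)$ is injective.
   Context: $\widetilde{Ein}_{1,n-1}$ denotes the universal cover of the Einstein universe, conformally identified with $\mathbb{S}^{n-1}\times\mathbb{R}$ with the conformal class of $d\sigma^2-dt^2$, time-oriented by $\partial_t$. Let $\sigma(x,t)=(-x,t+\pi)$; two points of $\widetilde{Ein}_{1,n-1}$ are conjugate if one is the image of the other under $\sigma$. A conformally flat spacetime $M$ is developable if it admits a developing map: a conformal, time-orientation preserving local diffeomorphism $D:M\to\widetilde{Ein}_{1,n-1}$; two points of $M$ are conjugate if their images under $D$ are conjugate. *)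

theory Defs
  imports "HOL-Analysis.Analysis"
begin

text \<open>Universal cover of the Einstein universe: S^{n-1} x R, S^{n-1} the unit sphere of real^'n.\<close>
definition ein_univ :: "((real^'n) \<times> real) set" where
  "ein_univ = {(x, t). norm x = 1}"

definition sph_dist :: "real^'n \<Rightarrow> real^'n \<Rightarrow> real" where
  "sph_dist x y = arccos (x \<bullet> y)"

definition ein_sigma :: "(real^'n) \<times> real \<Rightarrow> (real^'n) \<times> real" where
  "ein_sigma p = (- fst p, snd p + pi)"

text \<open>Future-directed causal curves in S^{n-1} x R with the conformal class of
  d sigma^2 - dt^2, time oriented by d/dt (parametrised on [0,1]).\<close>
definition ein_future_causal :: "(real \<Rightarrow> (real^'n) \<times> real) \<Rightarrow> bool" where
  "ein_future_causal c \<longleftrightarrow>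
     continuous_on {0..1} c \<and> (\<forall>s\<in>{0..1}. c s \<in> ein_univ) \<and>
     (\<forall>s1 s2. 0 \<le> s1 \<and> s1 \<le> s2 \<and> s2 \<le> 1 \<longrightarrow>
        sph_dist (fst (c s1)) (fst (c s2)) \<le> snd (c s2) - snd (c s1))"

text \<open>Developing map: a local homeomorphism into the Einstein universe; the conformal
  structure and time orientation of M are the ones pulled back by D.\<close>
definition developing_map :: "('m::topological_space \<Rightarrow> (real^'n) \<times> real) \<Rightarrow> bool" where
  "developing_map D \<longleftrightarrow> (\<forall>p. D p \<in> ein_univ) \<and>
     (\<forall>p. \<exists>U. open U \<and> p \<in> U \<and> openin (top_of_set ein_univ) (D ` U) \<and>
          (\<exists>g. homeomorphism U (D ` U) D g))"

definition causal_curve :: "('m::topological_space \<Rightarrow> (real^'n) \<times> real) \<Rightarrow> (real \<Rightarrow> 'm) \<Rightarrow> bool" where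
  "causal_curve D \<gamma> \<longleftrightarrow> continuous_on {0..1} \<gamma> \<and> ein_future_causal (D \<circ> \<gamma>)"

definition causal_past :: "('m::topological_space \<Rightarrow> (real^'n) \<times> real) \<Rightarrow> 'm \<Rightarrow> 'm set" where
  "causal_past D p = {q. \<exists>\<gamma>. causal_curve D \<gamma> \<and> \<gamma> 0 = q \<and> \<gamma> 1 = p}"

definition causal_future :: "('m::topological_space \<Rightarrow> (real^'n) \<times> real) \<Rightarrow> 'm \<Rightarrow> 'm set" where
  "causal_future D p = {q. \<exists>\<gamma>. causal_curve D \<gamma> \<and> \<gamma> 0 = p \<and> \<gamma> 1 = q}"

definition causal_spacetime :: "('m::topological_space \<Rightarrow> (real^'n) \<times> real) \<Rightarrow> bool" where
  "causal_spacetime D \<longleftrightarrow>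
     (\<forall>\<gamma>. causal_curve D \<gamma> \<and> \<gamma> 0 = \<gamma> 1 \<longrightarrow> (\<forall>s\<in>{0..1}. \<gamma> s = \<gamma> 0))"

definition globally_hyperbolic :: "('m::topological_space \<Rightarrow> (real^'n) \<times> real) \<Rightarrow> bool" where
  "globally_hyperbolic D \<longleftrightarrow> causal_spacetime D \<and>
     (\<forall>p q. compact (causal_future D p \<inter> causal_past D q))"

definition conjugate_pts :: "('m \<Rightarrow> (real^'n) \<times> real) \<Rightarrow> 'm \<Rightarrow> 'm \<Rightarrow> bool" where
  "conjugate_pts D p q \<longleftrightarrow> D q = ein_sigma (D p) \<or> D p = ein_sigma (D q)"

end

theory Submission
  imports Defs
begin

text \<open>
  Suppose q1 and q2 in J^-(p) have the same image under D. By global hyperbolicity the compact set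
  J^+(q1) \<inter> J^+(q2) \<inter> J^-(p) contains a point r of smallest time. Developed points strictly
  inside the light cone of D q1 lie in the interior of J^+(q1); this is where the absence of
  conjugate points enters, because light rays of the Einstein universe stay on the boundary of
  the causal future only up to the conjugate point. By minimality of r, D r therefore lies on
  the light cone of D q1, at time distance less than pi. Causal curves from q1 and from q2 to r
  then both develop into the unique light ray from D q1 = D q2 to D r, so close to r, where D is
  injective, they cross every time level in a common point: a point of the common causal future
  earlier than r, which is absurd.
\<close>

section \<open>Spherical distance\<close>

lemma inner_unit_bounds:
  fixes x y :: "'a::real_inner"
  assumes "norm x = 1" "norm y = 1"
  shows "-1 \<le> x \<bullet> y" "x \<bullet> y \<le> 1"
  using Cauchy_Schwarz_ineq2[of x y] assms by auto

lemma inner_unit_self: "norm (x::'a::real_inner) = 1 \<Longrightarrow> x \<bullet> x = 1"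
  by (metis norm_eq_1)

lemma sph_dist_nonneg: "norm x = 1 \<Longrightarrow> norm y = 1 \<Longrightarrow> 0 \<le> sph_dist x y"
  unfolding sph_dist_def using inner_unit_bounds[of x y] by (simp add: arccos_lbound)

lemma sph_dist_le_pi: "norm x = 1 \<Longrightarrow> norm y = 1 \<Longrightarrow> sph_dist x y \<le> pi"
  unfolding sph_dist_def using inner_unit_bounds[of x y] by (simp add: arccos_ubound)

lemma sph_dist_commute: "sph_dist x y = sph_dist y x"
  unfolding sph_dist_def by (simp add: inner_commute)

lemma sph_dist_self: "norm x = 1 \<Longrightarrow> sph_dist x x = 0"
  unfolding sph_dist_def by (simp add: inner_unit_self)

lemma cos_sph_dist: "norm x = 1 \<Longrightarrow> norm y = 1 \<Longrightarrow> cos (sph_dist x y) = x \<bullet> y"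
  unfolding sph_dist_def using inner_unit_bounds[of x y] by (simp add: cos_arccos)

lemma norm_diff_le_sph_dist:
  fixes x y :: "real^'n"
  assumes "norm x = 1" "norm y = 1"
  shows "norm (x - y) \<le> sph_dist x y"
proof -
  let ?d = "sph_dist x y"
  have "norm (x - y) ^ 2 = 2 - 2 * cos ?d"
    using assms by (simp add: power2_norm_eq_inner inner_diff_left inner_diff_right
        inner_commute inner_unit_self cos_sph_dist)
  also have "\<dots> = (2 * sin (?d / 2)) ^ 2"
    using cos_double_sin[of "?d / 2"] by (simp add: power2_eq_square)
  finally have "norm (x - y) = \<bar>2 * sin (?d / 2)\<bar>"
    by (metis norm_ge_zero real_sqrt_abs real_sqrt_unique)
  then show ?thesis
    using abs_sin_x_le_abs_x[of "?d / 2"] sph_dist_nonneg[OF assms] by simp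
qed

lemma sph_dist_eq_0_iff:
  fixes x y :: "real^'n"
  assumes "norm x = 1" "norm y = 1"
  shows "sph_dist x y = 0 \<longleftrightarrow> x = y"
proof
  assume "sph_dist x y = 0"
  then have "norm (x - y) \<le> 0" using norm_diff_le_sph_dist[OF assms] by simp
  then show "x = y" by simp
qed (simp add: sph_dist_self assms)

lemma sph_dist_eq_pi_imp:
  fixes x y :: "real^'n"
  assumes "norm x = 1" "norm y = 1" "sph_dist x y = pi"
  shows "y = - x"
proof -
  have "norm (x + y) ^ 2 = 0"
    using assms cos_sph_dist[OF assms(1,2)]
    by (simp add: power2_norm_eq_inner inner_add_left inner_add_right inner_commute inner_unit_self)
  then have "x + y = 0" by simp
  then show ?thesis by (simp add: eq_neg_iff_add_eq_0 add.commute)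
qed

lemma sph_dist_triangle:
  fixes x y z :: "real^'n"
  assumes x: "norm x = 1" and y: "norm y = 1" and z: "norm z = 1"
  shows "sph_dist x z \<le> sph_dist x y + sph_dist y z"
proof (cases "sph_dist x y + sph_dist y z \<le> pi")
  case False
  then show ?thesis using sph_dist_le_pi[OF x z] by simp
next
  case True
  define a where "a = sph_dist x y"
  define b where "b = sph_dist y z"
  \<comment> \<open>components of x and z orthogonal to y have lengths sin a and sin b\<close>
  define x' where "x' = x - cos a *\<^sub>R y"
  define z' where "z' = z - cos b *\<^sub>R y"
  have ca: "x \<bullet> y = cos a" and cb: "y \<bullet> z = cos b"
    using cos_sph_dist[OF x y] cos_sph_dist[OF y z] a_def b_def by auto
  have "norm x' ^ 2 = sin a ^ 2" "norm z' ^ 2 = sin b ^ 2"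
    unfolding x'_def z'_def power2_norm_eq_inner using x y z ca cb
    by (simp_all add: inner_diff_left inner_diff_right inner_commute inner_unit_self
        sin_squared_eq power2_eq_square algebra_simps)
  moreover have "0 \<le> sin a" "0 \<le> sin b"
    unfolding a_def b_def using sph_dist_nonneg sph_dist_le_pi x y z sin_ge_zero by blast+
  ultimately have "norm x' = sin a" "norm z' = sin b"
    by (metis norm_ge_zero power2_eq_imp_eq)+
  moreover have "x \<bullet> z = cos a * cos b + x' \<bullet> z'"
    unfolding x'_def z'_def using ca cb y
    by (simp add: inner_diff_left inner_diff_right inner_commute inner_unit_self algebra_simps)
  moreover have "- (norm x' * norm z') \<le> x' \<bullet> z'"
    using norm_cauchy_schwarz[of "-x'" z'] by simp
  ultimately have "cos (a + b) \<le> x \<bullet> z" by (simp add: cos_add)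
  then have "arccos (x \<bullet> z) \<le> arccos (cos (a + b))"
    using inner_unit_bounds[OF x z] by (intro arccos_le_arccos) auto
  also have "\<dots> = a + b"
    using True a_def b_def sph_dist_nonneg[OF x y] sph_dist_nonneg[OF y z] by (simp add: arccos_cos)
  finally show ?thesis unfolding a_def b_def sph_dist_def .
qed

text \<open>Equality in the triangle inequality places y on the minimizing arc from x to z.\<close>
lemma sph_dist_add_eq_imp:
  fixes x y z :: "real^'n"
  assumes x: "norm x = 1" and y: "norm y = 1" and z: "norm z = 1"
    and eq: "sph_dist x y + sph_dist y z = sph_dist x z"
  shows "sin (sph_dist x z) *\<^sub>R y = sin (sph_dist y z) *\<^sub>R x + sin (sph_dist x y) *\<^sub>R z"
proof -
  define a where "a = sph_dist x y"
  define b where "b = sph_dist y z"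
  have xy: "x \<bullet> y = cos a" and yz: "y \<bullet> z = cos b" and xz: "x \<bullet> z = cos (a + b)"
    using cos_sph_dist[OF x y] cos_sph_dist[OF y z] cos_sph_dist[OF x z] eq a_def b_def by auto
  have "norm (sin (a + b) *\<^sub>R y - sin b *\<^sub>R x - sin a *\<^sub>R z) ^ 2
      = sin (a + b) ^ 2 + sin b ^ 2 + sin a ^ 2 - 2 * sin (a + b) * sin b * cos a
        - 2 * sin (a + b) * sin a * cos b + 2 * sin b * sin a * cos (a + b)"
    unfolding power2_norm_eq_inner using x y z xy yz xz
    by (simp add: inner_diff_left inner_diff_right inner_commute inner_unit_self
        power2_eq_square algebra_simps)
  also have "\<dots> = 0"
  proof -
    have "cos a ^ 2 = 1 - sin a ^ 2" "cos b ^ 2 = 1 - sin b ^ 2" by (simp_all add: cos_squared_eq)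
    then show ?thesis unfolding sin_add cos_add by algebra
  qed
  finally have "sin (a + b) *\<^sub>R y - sin b *\<^sub>R x - sin a *\<^sub>R z = 0" by simp
  then show ?thesis unfolding a_def b_def eq by (simp add: algebra_simps)
qed

lemma sph_dist_between_unique:
  fixes x z y1 y2 :: "real^'n"
  assumes x: "norm x = 1" and z: "norm z = 1" and y1: "norm y1 = 1" and y2: "norm y2 = 1"
    and lt: "sph_dist x z < pi"
    and between1: "sph_dist x y1 + sph_dist y1 z = sph_dist x z"
    and between2: "sph_dist x y2 + sph_dist y2 z = sph_dist x z"
    and eq: "sph_dist x y1 = sph_dist x y2"
  shows "y1 = y2"
proof (cases "sph_dist x z = 0")
  case True
  then have "sph_dist x y1 = 0"
    using between1 sph_dist_nonneg[OF x y1] sph_dist_nonneg[OF y1 z] by linarith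
  then have "y1 = x" "y2 = x" using eq sph_dist_eq_0_iff[OF x y1] sph_dist_eq_0_iff[OF x y2] by auto
  then show ?thesis by simp
next
  case False
  then have "0 < sph_dist x z" using sph_dist_nonneg[OF x z] by linarith
  then have "sin (sph_dist x z) \<noteq> 0" using lt sin_gt_zero by (metis less_irrefl)
  moreover have "sph_dist y1 z = sph_dist y2 z" using between1 between2 eq by linarith
  then have "sin (sph_dist x z) *\<^sub>R y1 = sin (sph_dist x z) *\<^sub>R y2"
    using sph_dist_add_eq_imp[OF x y1 z between1] sph_dist_add_eq_imp[OF x y2 z between2] eq
    by (simp only:)
  ultimately show ?thesis by simp
qed

text \<open>Two minimizing arcs overlapping in an arc of positive length form one minimizing arc,
  as long as the total length stays below pi.\<close>
lemma sph_dist_geodesic_extend: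
  fixes x0 x1 x2 x3 :: "real^'n"
  assumes u0: "norm x0 = 1" and u1: "norm x1 = 1" and u2: "norm x2 = 1" and u3: "norm x3 = 1"
    and e1: "sph_dist x0 x1 + sph_dist x1 x2 = sph_dist x0 x2"
    and e2: "sph_dist x1 x2 + sph_dist x2 x3 = sph_dist x1 x3"
    and pos: "0 < sph_dist x1 x2"
    and lt: "sph_dist x0 x1 + sph_dist x1 x2 + sph_dist x2 x3 < pi"
  shows "sph_dist x0 x3 = sph_dist x0 x1 + sph_dist x1 x2 + sph_dist x2 x3"
proof -
  define a where "a = sph_dist x0 x1"
  define d where "d = sph_dist x1 x2"
  define b where "b = sph_dist x2 x3"
  have ab: "0 \<le> a" "0 \<le> b" using sph_dist_nonneg u0 u1 u2 u3 a_def b_def by auto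
  have "d < pi" using lt ab a_def b_def d_def by linarith
  then have "sin d \<noteq> 0" using pos d_def sin_gt_zero[of d] by simp
  then have sd: "sin d ^ 2 \<noteq> 0" by simp
  have h0: "sin d *\<^sub>R x0 = sin (a + d) *\<^sub>R x1 - sin a *\<^sub>R x2"
    using sph_dist_add_eq_imp[OF u0 u1 u2 e1] e1 a_def d_def by (simp add: algebra_simps)
  have h3: "sin d *\<^sub>R x3 = sin (d + b) *\<^sub>R x2 - sin b *\<^sub>R x1"
    using sph_dist_add_eq_imp[OF u1 u2 u3 e2] e2 b_def d_def by (simp add: algebra_simps)
  have "sin d ^ 2 * (x0 \<bullet> x3) = (sin d *\<^sub>R x0) \<bullet> (sin d *\<^sub>R x3)"
    by (simp add: power2_eq_square)
  also have "\<dots> = sin (a + d) * sin (d + b) * cos d - sin (a + d) * sin b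
      - sin a * sin (d + b) + sin a * sin b * cos d"
    unfolding h0 h3 using u1 u2 cos_sph_dist[OF u1 u2] d_def
    by (simp add: inner_diff_left inner_diff_right inner_commute inner_unit_self algebra_simps)
  also have "\<dots> = sin d ^ 2 * cos (a + d + b)"
  proof -
    have "cos a ^ 2 = 1 - sin a ^ 2" "cos b ^ 2 = 1 - sin b ^ 2" "cos d ^ 2 = 1 - sin d ^ 2"
      by (simp_all add: cos_squared_eq)
    then show ?thesis unfolding sin_add cos_add by algebra
  qed
  finally have "x0 \<bullet> x3 = cos (a + d + b)" using sd by simp
  then have "sph_dist x0 x3 = arccos (cos (a + d + b))" by (simp add: sph_dist_def)
  also have "\<dots> = a + d + b" using ab pos lt a_def b_def d_def by (intro arccos_cos) auto
  finally show ?thesis unfolding a_def b_def d_def .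
qed

lemma sph_geodesic_exists:
  fixes x y :: "real^'n"
  assumes x: "norm x = 1" and y: "norm y = 1" and lt: "sph_dist x y < pi"
  obtains k :: "real \<Rightarrow> real^'n" where "continuous_on UNIV k" "k 0 = x" "k 1 = y"
    "\<And>s. norm (k s) = 1"
    "\<And>s1 s2. 0 \<le> s1 \<Longrightarrow> s1 \<le> s2 \<Longrightarrow> s2 \<le> 1 \<Longrightarrow> sph_dist (k s1) (k s2) = (s2 - s1) * sph_dist x y"
proof (cases "sph_dist x y = 0")
  case True
  then have "x = y" using sph_dist_eq_0_iff[OF x y] by simp
  show ?thesis
    by (rule that[of "\<lambda>s. x"]) (use \<open>x = y\<close> x True in \<open>auto simp: sph_dist_self\<close>)
next
  case False
  define a where "a = sph_dist x y"
  have a: "0 < a" "a < pi" using False sph_dist_nonneg[OF x y] lt a_def by auto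
  have sa: "0 < sin a" using a sin_gt_zero by blast
  \<comment> \<open>unit tangent vector at x pointing towards y\<close>
  define u where "u = (1 / sin a) *\<^sub>R (y - cos a *\<^sub>R x)"
  have xx: "x \<bullet> x = 1" using x by (simp add: inner_unit_self)
  have xy: "x \<bullet> y = cos a" using cos_sph_dist[OF x y] a_def by simp
  have xu: "x \<bullet> u = 0" unfolding u_def using xx xy by (simp add: inner_diff_right)
  have "(y - cos a *\<^sub>R x) \<bullet> (y - cos a *\<^sub>R x) = 1 - cos a ^ 2"
    using xx xy y by (simp add: inner_diff_left inner_diff_right inner_commute inner_unit_self
        power2_eq_square)
  also have "\<dots> = sin a ^ 2" by (simp add: sin_squared_eq)
  finally have uu: "u \<bullet> u = 1" unfolding u_def using sa by (simp add: power2_eq_square)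
  define k where "k s = cos (s * a) *\<^sub>R x + sin (s * a) *\<^sub>R u" for s
  have kk: "k s \<bullet> k t = cos ((t - s) * a)" for s t
  proof -
    have "k s \<bullet> k t = cos (s * a) * cos (t * a) + sin (s * a) * sin (t * a)"
      unfolding k_def using xx xu uu by (simp add: inner_add_left inner_add_right inner_commute)
    also have "\<dots> = cos ((t - s) * a)" by (simp add: cos_diff left_diff_distrib)
    finally show ?thesis .
  qed
  have "sin a *\<^sub>R u = y - cos a *\<^sub>R x" unfolding u_def using sa by simp
  then have "k 1 = y" unfolding k_def by simp
  moreover have "k 0 = x" unfolding k_def by simp
  moreover have "norm (k s) = 1" for s using kk[of s s] by (simp add: norm_eq_sqrt_inner)
  moreover have "sph_dist (k s1) (k s2) = (s2 - s1) * a" if "0 \<le> s1" "s1 \<le> s2" "s2 \<le> 1" for s1 s2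
  proof -
    have "(s2 - s1) * a \<le> 1 * pi" using that a by (intro mult_mono) auto
    then show ?thesis unfolding sph_dist_def kk using that a by (simp add: arccos_cos)
  qed
  moreover have "continuous_on UNIV k" unfolding k_def by (intro continuous_intros)
  ultimately show ?thesis using that a_def by blast
qed

lemma continuous_on_sph_dist:
  fixes f :: "'a::topological_space \<Rightarrow> real^'n"
  assumes "continuous_on S f" "\<And>s. s \<in> S \<Longrightarrow> norm (f s) = 1" "norm a = 1"
  shows "continuous_on S (\<lambda>s. sph_dist a (f s))"
  unfolding sph_dist_def using assms inner_unit_bounds[of a]
  by (intro continuous_intros) auto

lemma compact_level_set_Icc:
  fixes h :: "real \<Rightarrow> 'a::t1_space"
  assumes "continuous_on {a..b} h"
  shows "compact {s \<in> {a..b}. h s = y}"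
proof -
  have "closed {s \<in> {a..b}. h s = y}"
    using continuous_closed_preimage_constant[OF assms] by simp
  moreover have "bounded {s \<in> {a..b}. h s = y}"
    by (rule bounded_subset[OF compact_imp_bounded[OF compact_Icc]]) auto
  ultimately show ?thesis by (simp add: compact_eq_bounded_closed)
qed

lemma continuous_on_subinterval_reparam:
  fixes g :: "real \<Rightarrow> 'a::topological_space"
  assumes "continuous_on {0..1} g" "0 \<le> a" "a \<le> b" "b \<le> 1"
  shows "continuous_on {0..1} (\<lambda>s. g ((b - a) * s + a))"
proof -
  have "(b - a) * s + a \<in> {0..1}" if "s \<in> {0..1}" for s
    using assms that mult_right_le_one_le[of "b - a" s] by auto
  then have "(\<lambda>s. (b - a) * s + a) ` {0..1} \<subseteq> {0..1}" by blast
  then have "continuous_on {0..1} (g \<circ> (\<lambda>s. (b - a) * s + a))"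
    by (intro continuous_on_compose continuous_intros continuous_on_subset[OF assms(1)])
  then show ?thesis by (simp add: o_def)
qed

lemma continuous_on_Icc_nbhd:
  fixes \<gamma> :: "real \<Rightarrow> 'a::topological_space"
  assumes "continuous_on {0..1} \<gamma>" "s0 \<in> {0..1}" "open N" "\<gamma> s0 \<in> N"
  obtains \<epsilon> where "\<epsilon> > 0" "\<And>s. s \<in> {0..1} \<Longrightarrow> \<bar>s - s0\<bar> < \<epsilon> \<Longrightarrow> \<gamma> s \<in> N"
proof -
  obtain A where A: "open A" "s0 \<in> A" "\<And>s. s \<in> {0..1} \<Longrightarrow> s \<in> A \<Longrightarrow> \<gamma> s \<in> N"
    using assms unfolding continuous_on_topological by metis
  obtain \<epsilon> where \<epsilon>: "\<epsilon> > 0" "ball s0 \<epsilon> \<subseteq> A" using A(1,2) open_contains_ball by blast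
  show ?thesis
  proof (rule that[OF \<epsilon>(1)])
    fix s assume "s \<in> {0..1}" "\<bar>s - s0\<bar> < \<epsilon>"
    then show "\<gamma> s \<in> N" using A(3) \<epsilon>(2) by (auto simp: dist_real_def abs_minus_commute)
  qed
qed

lemma continuous_on_Icc_exists_later:
  fixes \<gamma> :: "real \<Rightarrow> 'a::topological_space"
  assumes "continuous_on {0..1} \<gamma>" "0 \<le> s0" "s0 < 1" "open N" "\<gamma> s0 \<in> N"
  obtains s where "s0 < s" "s \<le> 1" "\<gamma> s \<in> N"
proof -
  obtain \<epsilon> where \<epsilon>: "\<epsilon> > 0" "\<And>s. s \<in> {0..1} \<Longrightarrow> \<bar>s - s0\<bar> < \<epsilon> \<Longrightarrow> \<gamma> s \<in> N"
    using continuous_on_Icc_nbhd[OF assms(1) _ assms(4,5)] assms(2,3) by auto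
  show ?thesis using that[of "min 1 (s0 + \<epsilon> / 2)"] \<epsilon> assms(2,3) by simp
qed

section \<open>Causal relations of the Einstein universe\<close>

definition ein_causal :: "(real^'n) \<times> real \<Rightarrow> (real^'n) \<times> real \<Rightarrow> bool" where
  "ein_causal u w \<longleftrightarrow> sph_dist (fst u) (fst w) \<le> snd w - snd u"

definition ein_timelike :: "(real^'n) \<times> real \<Rightarrow> (real^'n) \<times> real \<Rightarrow> bool" where
  "ein_timelike u w \<longleftrightarrow> sph_dist (fst u) (fst w) < snd w - snd u"

definition ein_lightlike :: "(real^'n) \<times> real \<Rightarrow> (real^'n) \<times> real \<Rightarrow> bool" where
  "ein_lightlike u w \<longleftrightarrow> sph_dist (fst u) (fst w) = snd w - snd u"

lemma mem_ein_univ_iff: "u \<in> ein_univ \<longleftrightarrow> norm (fst u) = 1"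
  unfolding ein_univ_def by (cases u) auto

lemma ein_causal_iff: "ein_causal u w \<longleftrightarrow> ein_timelike u w \<or> ein_lightlike u w"
  unfolding ein_causal_def ein_timelike_def ein_lightlike_def by linarith

lemma ein_causal_refl: "u \<in> ein_univ \<Longrightarrow> ein_causal u u"
  unfolding ein_causal_def mem_ein_univ_iff by (simp add: sph_dist_self)

lemma ein_causal_time_le: "u \<in> ein_univ \<Longrightarrow> w \<in> ein_univ \<Longrightarrow> ein_causal u w \<Longrightarrow> snd u \<le> snd w"
  unfolding ein_causal_def mem_ein_univ_iff using sph_dist_nonneg[of "fst u" "fst w"] by linarith

lemma ein_causal_same_time_eq:
  assumes "u \<in> ein_univ" "w \<in> ein_univ" "ein_causal u w" "snd u = snd w"
  shows "u = w"
proof -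
  have "sph_dist (fst u) (fst w) = 0"
    using assms sph_dist_nonneg[of "fst u" "fst w"] unfolding ein_causal_def mem_ein_univ_iff
    by linarith
  then show ?thesis
    using assms sph_dist_eq_0_iff[of "fst u" "fst w"] unfolding mem_ein_univ_iff
    by (simp add: prod_eq_iff)
qed

lemma ein_causal_trans:
  assumes "u \<in> ein_univ" "v \<in> ein_univ" "w \<in> ein_univ" "ein_causal u v" "ein_causal v w"
  shows "ein_causal u w"
  using assms sph_dist_triangle[of "fst u" "fst v" "fst w"]
  unfolding ein_causal_def mem_ein_univ_iff by linarith

lemma ein_timelike_causal_trans:
  assumes "u \<in> ein_univ" "v \<in> ein_univ" "w \<in> ein_univ" "ein_timelike u v" "ein_causal v w"
  shows "ein_timelike u w"
  using assms sph_dist_triangle[of "fst u" "fst v" "fst w"]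
  unfolding ein_causal_def ein_timelike_def mem_ein_univ_iff by linarith

lemma ein_causal_timelike_trans:
  assumes "u \<in> ein_univ" "v \<in> ein_univ" "w \<in> ein_univ" "ein_causal u v" "ein_timelike v w"
  shows "ein_timelike u w"
  using assms sph_dist_triangle[of "fst u" "fst v" "fst w"]
  unfolding ein_causal_def ein_timelike_def mem_ein_univ_iff by linarith

lemma ein_lightlike_split:
  assumes "u \<in> ein_univ" "v \<in> ein_univ" "w \<in> ein_univ"
    and "ein_causal u v" "ein_causal v w" "ein_lightlike u w"
  shows "ein_lightlike u v" "ein_lightlike v w"
  using assms sph_dist_triangle[of "fst u" "fst v" "fst w"]
  unfolding ein_causal_def ein_lightlike_def mem_ein_univ_iff by linarith+

text \<open>Light rays from u refocus after time pi exactly at the conjugate point.\<close>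
lemma ein_lightlike_time_lt_pi:
  assumes "u \<in> ein_univ" "w \<in> ein_univ" "ein_lightlike u w" "w \<noteq> ein_sigma u"
  shows "snd w - snd u < pi"
proof -
  have "snd w - snd u \<le> pi"
    using assms sph_dist_le_pi unfolding ein_lightlike_def mem_ein_univ_iff by metis
  moreover have "snd w - snd u \<noteq> pi"
  proof
    assume pi: "snd w - snd u = pi"
    then have "fst w = - fst u"
      using assms sph_dist_eq_pi_imp unfolding ein_lightlike_def mem_ein_univ_iff by metis
    then show False using pi assms(4) unfolding ein_sigma_def by (auto simp: prod_eq_iff)
  qed
  ultimately show ?thesis by simp
qed

text \<open>Otherwise the light rays from u0 to u2 and from u1 to w, which overlap between u1 and u2,
  would join into a single light ray from u0 to w.\<close>
lemma ein_timelike_from_lightlike_segment: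
  assumes mem: "u0 \<in> ein_univ" "u1 \<in> ein_univ" "u2 \<in> ein_univ" "w \<in> ein_univ"
    and c01: "ein_causal u0 u1" and c12: "ein_causal u1 u2" and c2w: "ein_causal u2 w"
    and l02: "ein_lightlike u0 u2" and t0w: "ein_timelike u0 w"
    and t12: "snd u1 < snd u2" and tpi: "snd w - snd u0 < pi"
  shows "ein_timelike u1 w"
proof (rule ccontr)
  assume "\<not> ein_timelike u1 w"
  moreover have "ein_causal u1 w" using ein_causal_trans[OF mem(2-4) c12 c2w] .
  ultimately have l1w: "ein_lightlike u1 w" by (simp add: ein_causal_iff)
  have units: "norm (fst u0) = 1" "norm (fst u1) = 1" "norm (fst u2) = 1" "norm (fst w) = 1"
    using mem by (simp_all add: mem_ein_univ_iff)
  note d = ein_lightlike_split[OF mem(1-3) c01 c12 l02] ein_lightlike_split[OF mem(2-4) c12 c2w l1w]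
    l02 l1w
  have "sph_dist (fst u0) (fst w) = snd w - snd u0"
    using sph_dist_geodesic_extend[OF units] d t12 tpi unfolding ein_lightlike_def by simp
  then show False using t0w unfolding ein_timelike_def by simp
qed

lemma ein_lightlike_between_unique:
  assumes mem: "u \<in> ein_univ" "v \<in> ein_univ" "y1 \<in> ein_univ" "y2 \<in> ein_univ"
    and "ein_causal u y1" "ein_causal y1 v" "ein_causal u y2" "ein_causal y2 v"
    and uv: "ein_lightlike u v" "snd v - snd u < pi"
    and t: "snd y1 = snd y2"
  shows "y1 = y2"
proof -
  have "ein_lightlike u y1" "ein_lightlike y1 v" "ein_lightlike u y2" "ein_lightlike y2 v"
    using ein_lightlike_split assms by metis+
  then have "fst y1 = fst y2"
    using sph_dist_between_unique[of "fst u" "fst v" "fst y1" "fst y2"] mem uv t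
    unfolding ein_lightlike_def mem_ein_univ_iff by simp
  then show ?thesis using t by (simp add: prod_eq_iff)
qed

lemma ein_future_causal_continuous: "ein_future_causal c \<Longrightarrow> continuous_on {0..1} c"
  unfolding ein_future_causal_def by blast

lemma ein_future_causal_mem: "ein_future_causal c \<Longrightarrow> 0 \<le> s \<Longrightarrow> s \<le> 1 \<Longrightarrow> c s \<in> ein_univ"
  unfolding ein_future_causal_def by auto

lemma ein_future_causal_causal:
  "ein_future_causal c \<Longrightarrow> 0 \<le> s1 \<Longrightarrow> s1 \<le> s2 \<Longrightarrow> s2 \<le> 1 \<Longrightarrow> ein_causal (c s1) (c s2)"
  unfolding ein_future_causal_def ein_causal_def by blast

lemma ein_future_causal_time_mono:
  "ein_future_causal c \<Longrightarrow> 0 \<le> s1 \<Longrightarrow> s1 \<le> s2 \<Longrightarrow> s2 \<le> 1 \<Longrightarrow> snd (c s1) \<le> snd (c s2)"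
  using ein_causal_time_le ein_future_causal_causal ein_future_causal_mem by (meson order_trans)

lemma ein_future_causal_iff:
  "ein_future_causal c \<longleftrightarrow> continuous_on {0..1} c \<and> (\<forall>s\<in>{0..1}. c s \<in> ein_univ) \<and>
     (\<forall>s1 s2. 0 \<le> s1 \<and> s1 \<le> s2 \<and> s2 \<le> 1 \<longrightarrow> ein_causal (c s1) (c s2))"
  unfolding ein_future_causal_def ein_causal_def ..

lemma ein_future_causal_cong:
  assumes "\<And>s. s \<in> {0..1} \<Longrightarrow> c s = c' s"
  shows "ein_future_causal c \<longleftrightarrow> ein_future_causal c'"
proof -
  have "continuous_on {0..1} c \<longleftrightarrow> continuous_on {0..1} c'"
    using assms by (intro continuous_on_cong) auto
  then show ?thesis unfolding ein_future_causal_iff using assms by auto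
qed

lemma ein_future_causal_subpath:
  assumes c: "ein_future_causal c" and ab: "0 \<le> a" "a \<le> b" "b \<le> 1"
  shows "ein_future_causal (\<lambda>s. c ((b - a) * s + a))"
  unfolding ein_future_causal_iff
proof (intro conjI ballI allI impI)
  have maps: "(b - a) * s + a \<in> {0..1}" if "s \<in> {0..1}" for s
    using ab that mult_right_le_one_le[of "b - a" s] by auto
  show "continuous_on {0..1} (\<lambda>s. c ((b - a) * s + a))"
    using continuous_on_subinterval_reparam[OF ein_future_causal_continuous[OF c] ab] .
  show "c ((b - a) * s + a) \<in> ein_univ" if "s \<in> {0..1}" for s
    using maps[OF that] ein_future_causal_mem[OF c] by simp
  fix s1 s2 :: real
  assume s: "0 \<le> s1 \<and> s1 \<le> s2 \<and> s2 \<le> 1"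
  then have "(b - a) * s1 + a \<le> (b - a) * s2 + a" using ab by (simp add: mult_left_mono)
  then show "ein_causal (c ((b - a) * s1 + a)) (c ((b - a) * s2 + a))"
    using maps[of s1] maps[of s2] s ein_future_causal_causal[OF c] by simp
qed

lemma ein_future_causal_join:
  assumes c1: "ein_future_causal c1" and c2: "ein_future_causal c2" and e: "c1 1 = c2 0"
  shows "ein_future_causal (c1 +++ c2)"
  unfolding ein_future_causal_iff
proof (intro conjI ballI allI impI)
  show "continuous_on {0..1} (c1 +++ c2)"
    using c1 c2 e path_join_imp unfolding ein_future_causal_def path_def pathfinish_def pathstart_def
    by blast
  show "(c1 +++ c2) s \<in> ein_univ" if "s \<in> {0..1}" for s
    using that ein_future_causal_mem[OF c1] ein_future_causal_mem[OF c2]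
    by (auto simp: joinpaths_def)
  fix s1 s2 :: real
  assume s: "0 \<le> s1 \<and> s1 \<le> s2 \<and> s2 \<le> 1"
  consider "s2 \<le> 1/2" | "s1 \<le> 1/2" "1/2 < s2" | "1/2 < s1" by linarith
  then show "ein_causal ((c1 +++ c2) s1) ((c1 +++ c2) s2)"
  proof cases
    case 1
    then show ?thesis using s ein_future_causal_causal[OF c1, of "2 * s1" "2 * s2"]
      by (simp add: joinpaths_def)
  next
    case 2
    have "ein_causal (c1 (2 * s1)) (c2 0)"
      using s 2 ein_future_causal_causal[OF c1, of "2 * s1" 1] e by simp
    moreover have "ein_causal (c2 0) (c2 (2 * s2 - 1))"
      using s 2 ein_future_causal_causal[OF c2, of 0 "2 * s2 - 1"] by simp
    moreover have "c1 (2 * s1) \<in> ein_univ" "c2 0 \<in> ein_univ" "c2 (2 * s2 - 1) \<in> ein_univ"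
      using s 2 ein_future_causal_mem[OF c1] ein_future_causal_mem[OF c2] by simp_all
    ultimately have "ein_causal (c1 (2 * s1)) (c2 (2 * s2 - 1))"
      using ein_causal_trans by blast
    then show ?thesis using 2 by (simp add: joinpaths_def)
  next
    case 3
    then show ?thesis using s ein_future_causal_causal[OF c2, of "2 * s1 - 1" "2 * s2 - 1"]
      by (simp add: joinpaths_def)
  qed
qed

lemma ein_future_causal_const_if_same_time:
  assumes c: "ein_future_causal c" and t: "snd (c 0) = snd (c 1)" and s: "0 \<le> s" "s \<le> 1"
  shows "c s = c 0"
proof -
  have "snd (c 0) \<le> snd (c s)" "snd (c s) \<le> snd (c 1)"
    using ein_future_causal_time_mono[OF c] s by simp_all
  then show ?thesis
    using ein_causal_same_time_eq[of "c 0" "c s"] ein_future_causal_causal[OF c, of 0 s]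
      ein_future_causal_mem[OF c] s t by simp
qed

lemma ein_causal_segment:
  assumes u: "u \<in> ein_univ" and w: "w \<in> ein_univ"
    and uw: "ein_causal u w" and lt: "sph_dist (fst u) (fst w) < pi"
  obtains c where "ein_future_causal c" "c 0 = u" "c 1 = w"
proof -
  obtain k where k: "continuous_on UNIV k" "k 0 = fst u" "k 1 = fst w" "\<And>s. norm (k s) = 1"
    "\<And>s1 s2. 0 \<le> s1 \<Longrightarrow> s1 \<le> s2 \<Longrightarrow> s2 \<le> 1 \<Longrightarrow>
      sph_dist (k s1) (k s2) = (s2 - s1) * sph_dist (fst u) (fst w)"
    using sph_geodesic_exists u w lt unfolding mem_ein_univ_iff by metis
  define c where "c s = (k s, snd u + s * (snd w - snd u))" for s
  have "sph_dist (k s1) (k s2) \<le> (s2 - s1) * (snd w - snd u)"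
    if "0 \<le> s1" "s1 \<le> s2" "s2 \<le> 1" for s1 s2
    using k(5)[OF that] uw that unfolding ein_causal_def by (simp add: mult_left_mono)
  then have "ein_future_causal c"
    unfolding ein_future_causal_def c_def mem_ein_univ_iff using k(1,4)
    by (auto intro!: continuous_intros continuous_on_subset[OF k(1)] simp: algebra_simps)
  moreover have "c 0 = u" "c 1 = w" unfolding c_def using k(2,3) by simp_all
  ultimately show ?thesis using that by blast
qed

lemma ein_future_causal_last_lightlike:
  assumes c: "ein_future_causal c" and tl: "ein_timelike (c 0) (c 1)"
  obtains s1 where "0 \<le> s1" "s1 < 1" "ein_lightlike (c 0) (c s1)"
    "\<And>s. s1 < s \<Longrightarrow> s \<le> 1 \<Longrightarrow> ein_timelike (c 0) (c s)"
proof -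
  define h where "h s = snd (c s) - snd (c 0) - sph_dist (fst (c 0)) (fst (c s))" for s
  have h_nonneg: "0 \<le> h s" if "0 \<le> s" "s \<le> 1" for s
    using ein_future_causal_causal[OF c, of 0 s] that unfolding h_def ein_causal_def by simp
  have "continuous_on {0..1} (\<lambda>s. sph_dist (fst (c 0)) (fst (c s)))"
    using c ein_future_causal_mem[OF c] unfolding ein_future_causal_def mem_ein_univ_iff
    by (intro continuous_on_sph_dist continuous_intros) auto
  moreover have "continuous_on {0..1} (\<lambda>s. snd (c s))"
    using ein_future_causal_continuous[OF c] by (intro continuous_intros)
  ultimately have "continuous_on {0..1} h"
    unfolding h_def by (auto intro!: continuous_on_diff continuous_on_const)
  then have "compact {s \<in> {0..1}. h s = 0}" by (rule compact_level_set_Icc)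
  moreover have "h 0 = 0"
    using ein_future_causal_mem[OF c, of 0] unfolding h_def mem_ein_univ_iff
    by (simp add: sph_dist_self)
  ultimately obtain s1 where s1: "s1 \<in> {0..1}" "h s1 = 0"
    and last: "\<And>s. s \<in> {0..1} \<Longrightarrow> h s = 0 \<Longrightarrow> s \<le> s1"
    using compact_attains_sup[of "{s \<in> {0..1}. h s = 0}"] by force
  show ?thesis
  proof (rule that)
    show "0 \<le> s1" using s1 by simp
    have "h 1 > 0" using tl unfolding h_def ein_timelike_def by simp
    then show "s1 < 1" using s1 by (cases "s1 = 1") auto
    show "ein_lightlike (c 0) (c s1)" using s1 unfolding h_def ein_lightlike_def by simp
  next
    fix s assume s: "s1 < s" "s \<le> 1"
    then have "h s \<noteq> 0" "0 \<le> h s" using last[of s] h_nonneg[of s] s1 by auto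
    then show "ein_timelike (c 0) (c s)" unfolding h_def ein_timelike_def by simp
  qed
qed

text \<open>Small timelike diamonds form a neighbourhood basis of causally convex sets.\<close>
definition ein_diamond :: "(real^'n) \<times> real \<Rightarrow> real \<Rightarrow> ((real^'n) \<times> real) set" where
  "ein_diamond m e = {w \<in> ein_univ.
     ein_timelike (fst m, snd m - e) w \<and> ein_timelike w (fst m, snd m + e)}"

lemma ein_diamond_center: "m \<in> ein_univ \<Longrightarrow> 0 < e \<Longrightarrow> m \<in> ein_diamond m e"
  unfolding ein_diamond_def ein_timelike_def mem_ein_univ_iff by (simp add: sph_dist_self)

lemma ein_diamond_bounds:
  assumes m: "m \<in> ein_univ" and w: "w \<in> ein_diamond m e"
  shows "sph_dist (fst m) (fst w) < e" "\<bar>snd w - snd m\<bar> < e"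
proof -
  have units: "norm (fst m) = 1" "norm (fst w) = 1"
    using m w unfolding ein_diamond_def mem_ein_univ_iff by auto
  have "sph_dist (fst m) (fst w) < snd w - snd m + e" "sph_dist (fst m) (fst w) < snd m + e - snd w"
    using w unfolding ein_diamond_def ein_timelike_def by (auto simp: sph_dist_commute)
  then show "sph_dist (fst m) (fst w) < e" "\<bar>snd w - snd m\<bar> < e"
    using sph_dist_nonneg[OF units] by linarith+
qed

lemma ein_diamond_subset_ball:
  assumes m: "m \<in> ein_univ"
  shows "ein_diamond m e \<subseteq> ball m (2 * e)"
proof
  fix w assume w: "w \<in> ein_diamond m e"
  have "norm (fst m - fst w) \<le> sph_dist (fst m) (fst w)"
    using m w unfolding ein_diamond_def mem_ein_univ_iff by (simp add: norm_diff_le_sph_dist)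
  then have "norm (fst m - fst w) + norm (snd m - snd w) < 2 * e"
    using ein_diamond_bounds[OF m w] by (simp add: abs_minus_commute)
  moreover have "m - w = (fst m - fst w, snd m - snd w)" by (simp add: prod_eq_iff)
  then have "dist m w \<le> norm (fst m - fst w) + norm (snd m - snd w)"
    by (metis dist_norm norm_Pair_le)
  ultimately show "w \<in> ball m (2 * e)" by simp
qed

lemma ein_diamond_causally_convex:
  assumes m: "m \<in> ein_univ" and u: "u \<in> ein_diamond m e" and w: "w \<in> ein_diamond m e"
    and v: "v \<in> ein_univ" and uv: "ein_causal u v" and vw: "ein_causal v w"
  shows "v \<in> ein_diamond m e"
proof -
  have "(fst m, snd m - e) \<in> ein_univ" "(fst m, snd m + e) \<in> ein_univ"
    using m by (simp_all add: mem_ein_univ_iff)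
  moreover have "u \<in> ein_univ" "w \<in> ein_univ" using u w unfolding ein_diamond_def by simp_all
  ultimately show ?thesis
    using u w v uv vw ein_timelike_causal_trans ein_causal_timelike_trans
    unfolding ein_diamond_def by blast
qed

section \<open>Developed spacetimes\<close>

lemma causal_past_iff: "q \<in> causal_past D p \<longleftrightarrow> p \<in> causal_future D q"
  unfolding causal_past_def causal_future_def by blast

locale developed_spacetime =
  fixes D :: "'m::t2_space \<Rightarrow> (real^'n) \<times> real"
  assumes developing_map: "developing_map D"
begin

lemma D_mem: "D p \<in> ein_univ"
  using developing_map unfolding developing_map_def by blast

lemma norm_fst_D: "norm (fst (D p)) = 1"
  using D_mem mem_ein_univ_iff by blast

lemma chart:
  obtains U g where "open U" "p \<in> U" "openin (top_of_set ein_univ) (D ` U)"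
    "homeomorphism U (D ` U) D g"
  using developing_map unfolding developing_map_def by blast

lemma continuous_on_D: "continuous_on S D"
proof -
  have "isCont D p" for p
  proof -
    obtain U g where "open U" "p \<in> U" "homeomorphism U (D ` U) D g" using chart by metis
    then show ?thesis using homeomorphism_cont1 continuous_on_eq_continuous_at by blast
  qed
  then show ?thesis by (simp add: continuous_at_imp_continuous_on)
qed

lemma openin_image_D:
  assumes "open V"
  shows "openin (top_of_set ein_univ) (D ` V)"
proof (subst openin_subopen, intro ballI)
  fix w assume "w \<in> D ` V"
  then obtain p where p: "p \<in> V" "w = D p" by blast
  obtain U g where U: "open U" "p \<in> U" "openin (top_of_set ein_univ) (D ` U)"
    "homeomorphism U (D ` U) D g"
    using chart by metis
  have "openin (top_of_set U) (V \<inter> U)" using assms by (metis Int_commute openin_open_Int)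
  then have "openin (top_of_set (D ` U)) (D ` (V \<inter> U))"
    using homeomorphism_imp_open_map U(4) by blast
  then have "openin (top_of_set ein_univ) (D ` (V \<inter> U))" using openin_trans U(3) by blast
  then show "\<exists>T. openin (top_of_set ein_univ) T \<and> w \<in> T \<and> T \<subseteq> D ` V" using p U(2) by blast
qed

text \<open>Uniqueness of lifts, in the special case of a constant developed curve.\<close>
lemma curve_const_if_developed_const:
  fixes \<gamma> :: "real \<Rightarrow> 'm"
  assumes cont: "continuous_on {0..1} \<gamma>" and const: "\<And>s. s \<in> {0..1} \<Longrightarrow> D (\<gamma> s) = D (\<gamma> 0)"
    and s: "s \<in> {0..1}"
  shows "\<gamma> s = \<gamma> 0"
proof -
  obtain U g where U: "open U" "\<gamma> 0 \<in> U" "homeomorphism U (D ` U) D g" using chart by metis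
  have "{s \<in> {0..1}. \<gamma> s = \<gamma> 0} = {0..1} \<inter> \<gamma> -` U"
  proof safe
    fix s assume "s \<in> {0..1}" "\<gamma> s \<in> U"
    then show "\<gamma> s = \<gamma> 0" using homeomorphism_apply1[OF U(3)] U(2) const by metis
  qed (use U(2) in auto)
  then have "openin (top_of_set {0..1}) {s \<in> {0..1}. \<gamma> s = \<gamma> 0}"
    using continuous_openin_preimage_gen[OF cont U(1)] by simp
  then have "\<forall>s\<in>{0..1}. \<gamma> s = \<gamma> 0"
    by (intro continuous_levelset_openin[OF connected_Icc cont]) (use s in auto)
  then show ?thesis using s by blast
qed

lemma continuous_on_time: "continuous_on S (\<lambda>x. snd (D x))"
  using continuous_on_D by (rule continuous_on_snd)

lemma continuous_on_sph_dist_D: "norm a = 1 \<Longrightarrow> continuous_on S (\<lambda>x. sph_dist a (fst (D x)))"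
  by (rule continuous_on_sph_dist[OF continuous_on_fst[OF continuous_on_D]]) (simp_all add: norm_fst_D)

lemma open_ein_timelike_from: "norm (fst a) = 1 \<Longrightarrow> open {x. ein_timelike a (D x)}"
  unfolding ein_timelike_def
  by (rule open_Collect_less[OF continuous_on_sph_dist_D continuous_on_diff[OF continuous_on_time]])
    simp_all

lemma open_ein_timelike_to: "norm (fst a) = 1 \<Longrightarrow> open {x. ein_timelike (D x) a}"
  unfolding ein_timelike_def sph_dist_commute[of "fst (D _)"]
  by (rule open_Collect_less[OF continuous_on_sph_dist_D continuous_on_diff[OF _ continuous_on_time]])
    simp_all

lemma open_time_less: "open {x. snd (D x) < c}"
  by (rule open_Collect_less[OF continuous_on_time continuous_on_const])

lemma causal_curve_continuous: "causal_curve D \<gamma> \<Longrightarrow> continuous_on {0..1} \<gamma>"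
  unfolding causal_curve_def by blast

lemma causal_curve_developed: "causal_curve D \<gamma> \<Longrightarrow> ein_future_causal (\<lambda>s. D (\<gamma> s))"
  unfolding causal_curve_def o_def by blast

lemma causal_curve_const: "causal_curve D (\<lambda>s. p)"
  unfolding causal_curve_def ein_future_causal_iff o_def using D_mem ein_causal_refl[OF D_mem] by auto

lemma causal_curve_subpath:
  assumes "causal_curve D \<gamma>" "0 \<le> a" "a \<le> b" "b \<le> 1"
  shows "causal_curve D (\<lambda>s. \<gamma> ((b - a) * s + a))"
  using assms ein_future_causal_subpath[of "D \<circ> \<gamma>"]
    continuous_on_subinterval_reparam[OF causal_curve_continuous[OF assms(1)] assms(2-)]
  unfolding causal_curve_def by (simp add: o_def)

lemma causal_curve_join:
  assumes "causal_curve D \<gamma>1" "causal_curve D \<gamma>2" "\<gamma>1 1 = \<gamma>2 0"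
  shows "causal_curve D (\<gamma>1 +++ \<gamma>2)"
proof -
  have "D \<circ> (\<gamma>1 +++ \<gamma>2) = (D \<circ> \<gamma>1) +++ (D \<circ> \<gamma>2)" by (auto simp: joinpaths_def o_def)
  moreover have "ein_future_causal ((D \<circ> \<gamma>1) +++ (D \<circ> \<gamma>2))"
    by (rule ein_future_causal_join) (use assms in \<open>simp_all add: causal_curve_def\<close>)
  moreover have "continuous_on {0..1} (\<gamma>1 +++ \<gamma>2)"
    using assms path_join_imp[of \<gamma>1 \<gamma>2]
    unfolding causal_curve_def path_def pathstart_def pathfinish_def by blast
  ultimately show ?thesis unfolding causal_curve_def by simp
qed

lemma causal_future_refl: "p \<in> causal_future D p"
  unfolding causal_future_def using causal_curve_const by blast

lemma causal_future_trans:
  assumes "q \<in> causal_future D p" "r \<in> causal_future D q"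
  shows "r \<in> causal_future D p"
proof -
  obtain \<gamma>1 where "causal_curve D \<gamma>1" "\<gamma>1 0 = p" "\<gamma>1 1 = q"
    using assms(1) unfolding causal_future_def by blast
  moreover obtain \<gamma>2 where "causal_curve D \<gamma>2" "\<gamma>2 0 = q" "\<gamma>2 1 = r"
    using assms(2) unfolding causal_future_def by blast
  ultimately have "causal_curve D (\<gamma>1 +++ \<gamma>2)" "(\<gamma>1 +++ \<gamma>2) 0 = p" "(\<gamma>1 +++ \<gamma>2) 1 = r"
    by (simp_all add: causal_curve_join) (simp_all add: joinpaths_def)
  then show ?thesis unfolding causal_future_def by blast
qed

lemma causal_curve_future:
  assumes "causal_curve D \<gamma>" "0 \<le> a" "a \<le> b" "b \<le> 1"
  shows "\<gamma> b \<in> causal_future D (\<gamma> a)"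
proof -
  have "(\<lambda>s. \<gamma> ((b - a) * s + a)) 0 = \<gamma> a" "(\<lambda>s. \<gamma> ((b - a) * s + a)) 1 = \<gamma> b" by simp_all
  then show ?thesis unfolding causal_future_def using causal_curve_subpath[OF assms] by blast
qed

lemma causal_future_imp_ein_causal:
  assumes "p \<in> causal_future D q"
  shows "ein_causal (D q) (D p)"
proof -
  obtain \<gamma> where "causal_curve D \<gamma>" "\<gamma> 0 = q" "\<gamma> 1 = p"
    using assms unfolding causal_future_def by blast
  then show ?thesis using ein_future_causal_causal[OF causal_curve_developed, of \<gamma> 0 1] by simp
qed

lemma causal_future_same_time_eq:
  assumes "p \<in> causal_future D q" "snd (D p) = snd (D q)"
  shows "p = q"
proof -
  obtain \<gamma> where \<gamma>: "causal_curve D \<gamma>" "\<gamma> 0 = q" "\<gamma> 1 = p"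
    using assms(1) unfolding causal_future_def by blast
  have "D (\<gamma> s) = D (\<gamma> 0)" if "s \<in> {0..1}" for s
    using ein_future_causal_const_if_same_time[OF causal_curve_developed[OF \<gamma>(1)]] \<gamma> assms(2) that
    by simp
  then show ?thesis
    using curve_const_if_developed_const[OF causal_curve_continuous[OF \<gamma>(1)], of 1] \<gamma> by simp
qed

lemma causal_curve_first_arrival:
  assumes \<gamma>: "causal_curve D \<gamma>"
  obtains \<sigma> where "0 \<le> \<sigma>" "\<sigma> \<le> 1" "\<gamma> \<sigma> = \<gamma> 1"
    "\<And>s. 0 \<le> s \<Longrightarrow> s < \<sigma> \<Longrightarrow> snd (D (\<gamma> s)) < snd (D (\<gamma> 1))"
proof -
  let ?t = "\<lambda>s. snd (D (\<gamma> s))"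
  have "continuous_on {0..1} ?t"
    using continuous_on_compose[OF causal_curve_continuous[OF \<gamma>] continuous_on_time] by (simp add: o_def)
  then have "compact {s \<in> {0..1}. ?t s = ?t 1}" by (rule compact_level_set_Icc)
  then obtain \<sigma> where \<sigma>: "\<sigma> \<in> {0..1}" "?t \<sigma> = ?t 1"
    and first: "\<And>s. s \<in> {0..1} \<Longrightarrow> ?t s = ?t 1 \<Longrightarrow> \<sigma> \<le> s"
    using compact_attains_inf[of "{s \<in> {0..1}. ?t s = ?t 1}"] by force
  show ?thesis
  proof (rule that)
    show "0 \<le> \<sigma>" "\<sigma> \<le> 1" using \<sigma>(1) by auto
    then show "\<gamma> \<sigma> = \<gamma> 1"
      using causal_future_same_time_eq[OF causal_curve_future[OF \<gamma>, of \<sigma> 1]] \<sigma>(2) by simp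
  next
    fix s assume s: "0 \<le> s" "s < \<sigma>"
    then have "?t s \<le> ?t 1"
      using ein_future_causal_time_mono[OF causal_curve_developed[OF \<gamma>]] \<sigma>(1) by simp
    moreover have "?t s \<noteq> ?t 1" using first[of s] s \<sigma>(1) by auto
    ultimately show "?t s < ?t 1" by simp
  qed
qed

lemma causal_future_approach:
  assumes r: "r \<in> causal_future D q" and t: "snd (D q) < snd (D r)" and N: "open N" "r \<in> N"
  obtains \<theta>0 where "\<theta>0 < snd (D r)"
    "\<And>\<theta>. \<theta>0 \<le> \<theta> \<Longrightarrow> \<theta> < snd (D r) \<Longrightarrow>
      \<exists>y\<in>N. y \<in> causal_future D q \<and> r \<in> causal_future D y \<and> snd (D y) = \<theta>"
proof -
  obtain \<gamma> where \<gamma>: "causal_curve D \<gamma>" "\<gamma> 0 = q" "\<gamma> 1 = r"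
    using r unfolding causal_future_def by blast
  obtain \<sigma> where \<sigma>: "0 \<le> \<sigma>" "\<sigma> \<le> 1" "\<gamma> \<sigma> = r"
    and below: "\<And>s. 0 \<le> s \<Longrightarrow> s < \<sigma> \<Longrightarrow> snd (D (\<gamma> s)) < snd (D r)"
    using causal_curve_first_arrival[OF \<gamma>(1)] \<gamma>(3) by metis
  have "\<sigma> \<noteq> 0" using \<sigma>(3) \<gamma>(2) t by auto
  obtain \<epsilon> where \<epsilon>: "\<epsilon> > 0" "\<And>s. s \<in> {0..1} \<Longrightarrow> \<bar>s - \<sigma>\<bar> < \<epsilon> \<Longrightarrow> \<gamma> s \<in> N"
    using continuous_on_Icc_nbhd[OF causal_curve_continuous[OF \<gamma>(1)], of \<sigma> N] \<sigma> N by auto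
  define a where "a = max 0 (\<sigma> - \<epsilon> / 2)"
  have a: "0 \<le> a" "a < \<sigma>" "\<sigma> - a < \<epsilon>"
    unfolding a_def using \<open>\<sigma> \<noteq> 0\<close> \<sigma>(1) \<epsilon>(1) by auto
  show ?thesis
  proof (rule that)
    show "snd (D (\<gamma> a)) < snd (D r)" using below a by simp
  next
    fix \<theta> assume \<theta>: "snd (D (\<gamma> a)) \<le> \<theta>" "\<theta> < snd (D r)"
    have "continuous_on {a..\<sigma>} (\<lambda>s. snd (D (\<gamma> s)))"
      using continuous_on_compose[OF causal_curve_continuous[OF \<gamma>(1)] continuous_on_time] a \<sigma>(2)
      by (auto simp: o_def elim: continuous_on_subset)
    then obtain u where u: "a \<le> u" "u \<le> \<sigma>" "snd (D (\<gamma> u)) = \<theta>"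
      using IVT'[of "\<lambda>s. snd (D (\<gamma> s))" a \<theta> \<sigma>] \<theta> \<sigma>(3) a by auto
    have "\<gamma> u \<in> N" using \<epsilon>(2)[of u] u a \<sigma>(2) by simp
    moreover have "\<gamma> u \<in> causal_future D q" "r \<in> causal_future D (\<gamma> u)"
      using causal_curve_future[OF \<gamma>(1), of 0 u] causal_curve_future[OF \<gamma>(1), of u \<sigma>] u a \<sigma> \<gamma>(2)
      by auto
    ultimately show "\<exists>y\<in>N. y \<in> causal_future D q \<and> r \<in> causal_future D y \<and> snd (D y) = \<theta>"
      using u(3) by blast
  qed
qed

section \<open>Causal charts\<close>

definition causal_chart :: "'m set \<Rightarrow> bool" where
  "causal_chart W \<longleftrightarrow> open W \<and> inj_on D W \<and>
     (\<forall>u\<in>W. \<forall>v\<in>W. ein_causal (D u) (D v) \<longrightarrow> v \<in> causal_future D u)"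

lemma causal_curve_lift:
  assumes hom: "homeomorphism U (D ` U) D g"
    and c: "ein_future_causal c" and sub: "c ` {0..1} \<subseteq> D ` U"
  shows "causal_curve D (g \<circ> c)"
proof -
  have "continuous_on {0..1} (g \<circ> c)"
    using ein_future_causal_continuous[OF c] continuous_on_subset[OF homeomorphism_cont2[OF hom] sub]
    by (rule continuous_on_compose)
  moreover have "(D \<circ> (g \<circ> c)) s = c s" if "s \<in> {0..1}" for s
    using homeomorphism_apply2[OF hom, of "c s"] sub that by (simp add: image_subset_iff)
  then have "ein_future_causal (D \<circ> (g \<circ> c))" using c ein_future_causal_cong by blast
  ultimately show ?thesis unfolding causal_curve_def by blast
qed

lemma chart_containing_diamond:
  obtains U g e where "open U" "p \<in> U" "homeomorphism U (D ` U) D g"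
    "0 < e" "e \<le> 1" "ein_diamond (D p) e \<subseteq> D ` U"
proof -
  obtain U g where U: "open U" "p \<in> U" "openin (top_of_set ein_univ) (D ` U)"
    "homeomorphism U (D ` U) D g"
    using chart by metis
  obtain V where V: "open V" "D ` U = ein_univ \<inter> V" using U(3) by (auto simp: openin_open)
  obtain \<epsilon> where \<epsilon>: "\<epsilon> > 0" "ball (D p) \<epsilon> \<subseteq> V"
    using V U(2) open_contains_ball by blast
  define e where "e = min (\<epsilon> / 2) 1"
  have e: "0 < e" "e \<le> 1" "2 * e \<le> \<epsilon>" using \<epsilon> by (auto simp: e_def)
  have "ein_diamond (D p) e \<subseteq> D ` U"
    using ein_diamond_subset_ball[OF D_mem, of p e] \<epsilon>(2) e(3) V(2)
    unfolding ein_diamond_def by fastforce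
  then show ?thesis using that U(1,2,4) e(1,2) by blast
qed

text \<open>The lift of the causal segment from D u to D v stays in the diamond by causal convexity.\<close>
lemma causal_future_if_diamond_causal:
  assumes hom: "homeomorphism U (D ` U) D g" and sub: "ein_diamond m e \<subseteq> D ` U"
    and m: "m \<in> ein_univ" and e: "e \<le> 1"
    and uv: "u \<in> U" "v \<in> U" "D u \<in> ein_diamond m e" "D v \<in> ein_diamond m e"
    and causal: "ein_causal (D u) (D v)"
  shows "v \<in> causal_future D u"
proof -
  have "snd (D v) - snd (D u) < 2"
    using ein_diamond_bounds(2)[OF m uv(3)] ein_diamond_bounds(2)[OF m uv(4)] e by linarith
  then have "sph_dist (fst (D u)) (fst (D v)) < pi"
    using causal pi_gt3 unfolding ein_causal_def by linarith
  then obtain c where c: "ein_future_causal c" "c 0 = D u" "c 1 = D v"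
    using ein_causal_segment[OF D_mem D_mem causal] by metis
  have "c s \<in> ein_diamond m e" if "s \<in> {0..1}" for s
  proof (rule ein_diamond_causally_convex[OF m uv(3,4)])
    show "c s \<in> ein_univ" using ein_future_causal_mem[OF c(1)] that by simp
    show "ein_causal (D u) (c s)" "ein_causal (c s) (D v)"
      using ein_future_causal_causal[OF c(1), of 0 s] ein_future_causal_causal[OF c(1), of s 1]
        c that by auto
  qed
  then have "causal_curve D (g \<circ> c)" using causal_curve_lift[OF hom c(1)] sub by blast
  moreover have "(g \<circ> c) 0 = u" "(g \<circ> c) 1 = v"
    using c homeomorphism_apply1[OF hom] uv by auto
  ultimately show ?thesis unfolding causal_future_def by blast
qed

lemma causal_chart_exists:
  obtains W where "p \<in> W" "causal_chart W"
proof -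
  obtain U g e where U: "open U" "p \<in> U" "homeomorphism U (D ` U) D g"
    and e: "0 < e" "e \<le> 1" and sub: "ein_diamond (D p) e \<subseteq> D ` U"
    using chart_containing_diamond by metis
  define W where "W = U \<inter> {x. D x \<in> ein_diamond (D p) e}"
  have "{x. D x \<in> ein_diamond (D p) e} = {x. ein_timelike (fst (D p), snd (D p) - e) (D x)} \<inter>
      {x. ein_timelike (D x) (fst (D p), snd (D p) + e)}"
    unfolding ein_diamond_def using D_mem by auto
  then have "open W"
    unfolding W_def using U(1) open_ein_timelike_from open_ein_timelike_to norm_fst_D
    by (metis fst_conv open_Int)
  moreover have "p \<in> W" unfolding W_def using U(2) ein_diamond_center[OF D_mem e(1)] by simp
  moreover have "inj_on D W"
    using homeomorphism_apply1[OF U(3)] unfolding W_def by (metis IntD1 inj_onI)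
  moreover have "v \<in> causal_future D u" if "u \<in> W" "v \<in> W" "ein_causal (D u) (D v)" for u v
    using causal_future_if_diamond_causal[OF U(3) sub D_mem e(2)] that unfolding W_def by blast
  ultimately show ?thesis using that unfolding causal_chart_def by blast
qed

lemma causal_chart_timelike_interior:
  assumes W: "causal_chart W" and uv: "u \<in> W" "v \<in> W" and tl: "ein_timelike (D u) (D v)"
  shows "v \<in> interior (causal_future D u)"
proof (rule interiorI)
  show "open (W \<inter> {x. ein_timelike (D u) (D x)})"
    using W open_ein_timelike_from[OF norm_fst_D] unfolding causal_chart_def by blast
  show "W \<inter> {x. ein_timelike (D u) (D x)} \<subseteq> causal_future D u"
    using W uv(1) ein_causal_iff unfolding causal_chart_def by blast
qed (use uv tl in simp)

lemma causal_chart_interior_step: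
  assumes W: "causal_chart W" and ab: "a \<in> W" "b \<in> W"
    and a: "a \<in> interior (causal_future D q)" and causal: "ein_causal (D a) (D b)"
  shows "b \<in> interior (causal_future D q)"
proof -
  let ?I = "interior (causal_future D q)"
  have "openin (top_of_set ein_univ) (D ` (?I \<inter> W))"
    using W openin_image_D unfolding causal_chart_def by blast
  moreover have "D a \<in> D ` (?I \<inter> W)" using a ab by blast
  ultimately obtain \<eta> where \<eta>: "\<eta> > 0" "ball (D a) \<eta> \<inter> ein_univ \<subseteq> D ` (?I \<inter> W)"
    unfolding openin_contains_ball by blast
  \<comment> \<open>a point developed slightly below a, hence timelike to b\<close>
  define w where "w = (fst (D a), snd (D a) - \<eta> / 2)"
  have "dist (D a) w = \<eta> / 2"
    unfolding w_def using \<eta>(1) by (cases "D a") (simp add: dist_Pair_Pair dist_real_def)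
  moreover have "w \<in> ein_univ" unfolding w_def mem_ein_univ_iff using norm_fst_D by simp
  ultimately have "w \<in> ball (D a) \<eta> \<inter> ein_univ" using \<eta>(1) by simp
  then obtain u where u: "u \<in> ?I \<inter> W" "D u = w" using \<eta>(2) by blast
  have "ein_timelike (D u) (D b)"
    using causal \<eta>(1) u(2) unfolding w_def ein_causal_def ein_timelike_def by simp
  then have "b \<in> interior (causal_future D u)" using causal_chart_timelike_interior W u(1) ab(2) by blast
  moreover have "causal_future D u \<subseteq> causal_future D q"
    using u(1) interior_subset causal_future_trans by blast
  ultimately show ?thesis using interior_mono by blast
qed

lemma interior_causal_future_forward:
  assumes a: "a \<in> interior (causal_future D q)" and b: "b \<in> causal_future D a"
  shows "b \<in> interior (causal_future D q)"
proof -
  let ?I = "interior (causal_future D q)"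
  obtain \<gamma> where \<gamma>: "causal_curve D \<gamma>" "\<gamma> 0 = a" "\<gamma> 1 = b"
    using b unfolding causal_future_def by blast
  define P where "P s t \<longleftrightarrow> (0 \<le> s \<longrightarrow> t \<le> 1 \<longrightarrow> \<gamma> s \<in> ?I \<longrightarrow> \<gamma> t \<in> ?I)" for s t :: real
  have "P 0 1"
  proof (rule Bolzano)
    fix s t u :: real assume "P s t" "P t u" "s \<le> t" "t \<le> u"
    then show "P s u" unfolding P_def by auto
  next
    fix x :: real assume local: "0 \<le> x" "x \<le> 1"
    obtain W where W: "\<gamma> x \<in> W" "causal_chart W" using causal_chart_exists by metis
    then obtain \<epsilon> where \<epsilon>: "\<epsilon> > 0" "\<And>s. s \<in> {0..1} \<Longrightarrow> \<bar>s - x\<bar> < \<epsilon> \<Longrightarrow> \<gamma> s \<in> W"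
      using continuous_on_Icc_nbhd[OF causal_curve_continuous[OF \<gamma>(1)], of x W] local
      unfolding causal_chart_def by auto
    have "P s t" if "s \<le> x" "x \<le> t" "t - s < \<epsilon>" for s t
      unfolding P_def
    proof (intro impI)
      assume "0 \<le> s" "t \<le> 1" "\<gamma> s \<in> ?I"
      moreover have "\<gamma> s \<in> W" "\<gamma> t \<in> W" using \<epsilon>(2) that \<open>0 \<le> s\<close> \<open>t \<le> 1\<close> by auto
      moreover have "ein_causal (D (\<gamma> s)) (D (\<gamma> t))"
        using ein_future_causal_causal[OF causal_curve_developed[OF \<gamma>(1)]] that calculation by simp
      ultimately show "\<gamma> t \<in> ?I" using causal_chart_interior_step[OF W(2)] by blast
    qed
    then show "\<exists>d>0. \<forall>s t. s \<le> x \<and> x \<le> t \<and> t - s < d \<longrightarrow> P s t" using \<epsilon>(1) by blast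
  qed simp
  then show ?thesis using \<gamma> a unfolding P_def by simp
qed

section \<open>Injectivity on causal pasts\<close>

lemma lightlike_time_lt_pi:
  assumes nc: "\<forall>p q. \<not> conjugate_pts D p q" and "ein_lightlike (D q) (D p)"
  shows "snd (D p) - snd (D q) < pi"
  using ein_lightlike_time_lt_pi[OF D_mem D_mem assms(2)] nc unfolding conjugate_pts_def by blast

lemma exists_timelike_predecessor_near:
  assumes p1: "p1 \<in> causal_future D q" "ein_lightlike (D q) (D p1)"
    and z: "z \<in> causal_future D p1" "ein_timelike (D q) (D z)" "snd (D z) - snd (D q) < pi"
    and N: "open N" "p1 \<in> N"
  obtains y where "y \<in> N" "y \<in> causal_future D q" "ein_timelike (D y) (D z)"
proof (cases "snd (D q) = snd (D p1)")
  case True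
  then show ?thesis using that[of q] causal_future_same_time_eq[OF p1(1)] N(2) z(2) causal_future_refl
    by auto
next
  case False
  then have "snd (D q) < snd (D p1)"
    using ein_causal_time_le[OF D_mem D_mem causal_future_imp_ein_causal[OF p1(1)]] by simp
  then obtain \<theta>0 where "\<theta>0 < snd (D p1)"
    "\<exists>y\<in>N. y \<in> causal_future D q \<and> p1 \<in> causal_future D y \<and> snd (D y) = \<theta>0"
    using causal_future_approach[OF p1(1) _ N] by (metis order_refl)
  then obtain y where y: "y \<in> N" "y \<in> causal_future D q" "p1 \<in> causal_future D y"
    "snd (D y) < snd (D p1)"
    by auto
  have "ein_timelike (D y) (D z)"
  proof (rule ein_timelike_from_lightlike_segment[OF D_mem D_mem D_mem D_mem])
    show "ein_causal (D q) (D y)" "ein_causal (D y) (D p1)" "ein_causal (D p1) (D z)"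
      using y z causal_future_imp_ein_causal by auto
  qed (use p1(2) z(2,3) y(4) in simp_all)
  then show ?thesis using that y by blast
qed

text \<open>The curve from q to p leaves the light cone of D q for good at some point p1. Points
  just after p1 are then timelike to points just before p1, and a causal chart around p1
  turns this into interior points of the causal future.\<close>
lemma interior_causal_future_if_timelike:
  assumes nc: "\<forall>p q. \<not> conjugate_pts D p q"
    and p: "p \<in> causal_future D q" and tl: "ein_timelike (D q) (D p)"
  shows "p \<in> interior (causal_future D q)"
proof -
  obtain \<gamma> where \<gamma>: "causal_curve D \<gamma>" "\<gamma> 0 = q" "\<gamma> 1 = p"
    using p unfolding causal_future_def by blast
  obtain s1 where s1: "0 \<le> s1" "s1 < 1" "ein_lightlike (D q) (D (\<gamma> s1))"
    and after: "\<And>s. s1 < s \<Longrightarrow> s \<le> 1 \<Longrightarrow> ein_timelike (D q) (D (\<gamma> s))"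
    using ein_future_causal_last_lightlike[OF causal_curve_developed[OF \<gamma>(1)]] \<gamma> tl by metis
  define p1 where "p1 = \<gamma> s1"
  have p1: "p1 \<in> causal_future D q" using causal_curve_future[OF \<gamma>(1), of 0 s1] \<gamma> s1 p1_def by simp
  have tpi: "snd (D p1) - snd (D q) < pi" using lightlike_time_lt_pi[OF nc] s1(3) p1_def by simp
  obtain W where W: "p1 \<in> W" "causal_chart W" using causal_chart_exists by metis
  have "open (W \<inter> {x. snd (D x) < snd (D q) + pi})"
    using W(2) open_time_less unfolding causal_chart_def by blast
  moreover have "\<gamma> s1 \<in> W \<inter> {x. snd (D x) < snd (D q) + pi}" using W(1) tpi p1_def by simp
  ultimately obtain s where "s1 < s" "s \<le> 1" "\<gamma> s \<in> W \<inter> {x. snd (D x) < snd (D q) + pi}"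
    using continuous_on_Icc_exists_later[OF causal_curve_continuous[OF \<gamma>(1)] s1(1,2)] by metis
  then have s: "s1 < s" "s \<le> 1" "\<gamma> s \<in> W" "snd (D (\<gamma> s)) < snd (D q) + pi" by auto
  define z where "z = \<gamma> s"
  have z: "ein_timelike (D q) (D z)" "z \<in> causal_future D p1" "p \<in> causal_future D z"
    using after[OF s(1,2)] causal_curve_future[OF \<gamma>(1)] s s1 \<gamma>(3) unfolding z_def p1_def by auto
  obtain y where y: "y \<in> W" "y \<in> causal_future D q" "ein_timelike (D y) (D z)"
    using exists_timelike_predecessor_near[OF p1 _ z(2,1) _ _ W(1)] s1(3) s(4) W(2)
    unfolding p1_def z_def causal_chart_def by auto
  have "z \<in> interior (causal_future D y)"
    using causal_chart_timelike_interior[OF W(2) y(1) _ y(3)] s(3) z_def by simp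
  then have "z \<in> interior (causal_future D q)"
    using interior_mono causal_future_trans[OF y(2)] by blast
  then show ?thesis using interior_causal_future_forward z(3) by blast
qed

lemma earliest_common_future:
  assumes gh: "globally_hyperbolic D" and q1: "q1 \<in> causal_past D p" and q2: "q2 \<in> causal_past D p"
  obtains r where "r \<in> causal_future D q1" "r \<in> causal_future D q2"
    "\<And>y. y \<in> causal_future D q1 \<Longrightarrow> y \<in> causal_future D q2 \<Longrightarrow> r \<in> causal_future D y \<Longrightarrow>
      snd (D r) \<le> snd (D y)"
proof -
  define K where "K = (causal_future D q1 \<inter> causal_past D p) \<inter> (causal_future D q2 \<inter> causal_past D p)"
  have "compact (causal_future D q1 \<inter> causal_past D p)" "compact (causal_future D q2 \<inter> causal_past D p)"
    using gh unfolding globally_hyperbolic_def by simp_all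
  then have "compact K" unfolding K_def by (rule compact_Int)
  moreover have "p \<in> K" unfolding K_def using q1 q2 causal_future_refl by (simp add: causal_past_iff)
  ultimately obtain r where r: "r \<in> K" and min: "\<forall>y\<in>K. snd (D r) \<le> snd (D y)"
    using continuous_attains_inf[OF _ _ continuous_on_time, of K] by auto
  show ?thesis
  proof (rule that)
    show "r \<in> causal_future D q1" "r \<in> causal_future D q2" using r unfolding K_def by auto
  next
    fix y assume y: "y \<in> causal_future D q1" "y \<in> causal_future D q2" "r \<in> causal_future D y"
    have "p \<in> causal_future D r" using r unfolding K_def by (simp add: causal_past_iff)
    then have "y \<in> causal_past D p" using causal_future_trans[OF y(3)] by (simp add: causal_past_iff)
    then have "y \<in> K" unfolding K_def using y by simp
    then show "snd (D r) \<le> snd (D y)" using min by blast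
  qed
qed

text \<open>Causal curves from q1 and q2 with D q1 = D q2 to a point r on the light cone of D q1 follow
  the same light ray, so near r they cross every time level at the same developed point, and
  D is injective near r.\<close>
lemma causal_futures_meet_before:
  assumes r1: "r \<in> causal_future D q1" and r2: "r \<in> causal_future D q2" and eq: "D q1 = D q2"
    and ll: "ein_lightlike (D q1) (D r)"
    and t: "snd (D q1) < snd (D r)" "snd (D r) - snd (D q1) < pi"
  obtains y where "y \<in> causal_future D q1" "y \<in> causal_future D q2" "r \<in> causal_future D y"
    "snd (D y) < snd (D r)"
proof -
  obtain W where W: "r \<in> W" "causal_chart W" using causal_chart_exists by metis
  then have oW: "open W" and inj: "inj_on D W" unfolding causal_chart_def by auto
  obtain \<theta>1 where \<theta>1: "\<theta>1 < snd (D r)"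
    "\<And>\<theta>. \<theta>1 \<le> \<theta> \<Longrightarrow> \<theta> < snd (D r) \<Longrightarrow>
      \<exists>y\<in>W. y \<in> causal_future D q1 \<and> r \<in> causal_future D y \<and> snd (D y) = \<theta>"
    using causal_future_approach[OF r1 t(1) oW W(1)] by metis
  obtain \<theta>2 where \<theta>2: "\<theta>2 < snd (D r)"
    "\<And>\<theta>. \<theta>2 \<le> \<theta> \<Longrightarrow> \<theta> < snd (D r) \<Longrightarrow>
      \<exists>y\<in>W. y \<in> causal_future D q2 \<and> r \<in> causal_future D y \<and> snd (D y) = \<theta>"
    using causal_future_approach[OF r2 _ oW W(1)] t(1) eq by metis
  obtain y1 y2 where y1: "y1 \<in> W" "y1 \<in> causal_future D q1" "r \<in> causal_future D y1"
    and y2: "y2 \<in> W" "y2 \<in> causal_future D q2" "r \<in> causal_future D y2"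
    and t12: "snd (D y1) = max \<theta>1 \<theta>2" "snd (D y2) = max \<theta>1 \<theta>2"
    using \<theta>1(2)[of "max \<theta>1 \<theta>2"] \<theta>2(2)[of "max \<theta>1 \<theta>2"] \<theta>1(1) \<theta>2(1) by auto
  have "D y1 = D y2"
    using ein_lightlike_between_unique[OF D_mem D_mem D_mem D_mem] causal_future_imp_ein_causal
      y1 y2 ll t(2) t12 eq by metis
  then have "y1 = y2" using inj_onD[OF inj _ y1(1) y2(1)] by blast
  then show ?thesis using that[of y1] y1 y2 t12 \<theta>1(1) \<theta>2(1) by simp
qed

lemma inj_on_causal_past:
  assumes gh: "globally_hyperbolic D" and nc: "\<forall>p q. \<not> conjugate_pts D p q"
  shows "inj_on D (causal_past D p)"
proof (rule inj_onI)
  fix q1 q2 assume q1: "q1 \<in> causal_past D p" and q2: "q2 \<in> causal_past D p" and eq: "D q1 = D q2"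
  obtain r where r1: "r \<in> causal_future D q1" and r2: "r \<in> causal_future D q2"
    and earliest: "\<And>y. y \<in> causal_future D q1 \<Longrightarrow> y \<in> causal_future D q2 \<Longrightarrow>
      r \<in> causal_future D y \<Longrightarrow> snd (D r) \<le> snd (D y)"
    using earliest_common_future[OF gh q1 q2] by blast
  show "q1 = q2"
  proof (cases "snd (D q1) = snd (D r)")
    case True
    then show ?thesis using causal_future_same_time_eq r1 r2 eq by metis
  next
    case False
    then have t: "snd (D q1) < snd (D r)"
      using ein_causal_time_le[OF D_mem D_mem causal_future_imp_ein_causal[OF r1]] by simp
    \<comment> \<open>otherwise points of J^+(q2) just below r would lie in J^+(q1)\<close>
    have "r \<notin> interior (causal_future D q1)"
    proof
      assume "r \<in> interior (causal_future D q1)"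
      then obtain \<theta>0 where "\<theta>0 < snd (D r)" "\<exists>y\<in>interior (causal_future D q1).
          y \<in> causal_future D q2 \<and> r \<in> causal_future D y \<and> snd (D y) = \<theta>0"
        using causal_future_approach[OF r2 _ open_interior] t eq by (metis order_refl)
      then show False using earliest interior_subset by fastforce
    qed
    then have ll: "ein_lightlike (D q1) (D r)"
      using interior_causal_future_if_timelike[OF nc r1] causal_future_imp_ein_causal[OF r1]
      by (auto simp: ein_causal_iff)
    obtain y where "y \<in> causal_future D q1" "y \<in> causal_future D q2" "r \<in> causal_future D y"
      "snd (D y) < snd (D r)"
      using causal_futures_meet_before[OF r1 r2 eq ll t lightlike_time_lt_pi[OF nc ll]] by blast
    then show ?thesis using earliest by fastforce
  qed
qed

end

theorem corollary5p2:
  fixes D :: "'m::{t2_space, second_countable_topology} \<Rightarrow> (real^'n) \<times> real"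
  assumes "CARD('n) \<ge> 3"
    and "connected (UNIV :: 'm set)"
    and "developing_map D"
    and "globally_hyperbolic D"
    and "\<forall>p q. \<not> conjugate_pts D p q"
  shows "\<forall>p. inj_on D (causal_past D p)"
proof -
  interpret developed_spacetime D by unfold_locales (fact assms(3))
  show ?thesis using inj_on_causal_past[OF assms(4,5)] by blast
qed

end
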